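(* Let $c\in Z^1(G,M(\mathbb{A})^\times)$ be continuous. (i) If $c^{-1}:r\mapsto c(r)^{-1}$ is also continuous, then for every $a\in\mathbb{A}$ the map $r\in G\mapsto\alpha_r(a)\,c(r)\in M(\mathbb{A})$ is continuous. (ii) The same conclusion holds for any continuous $c\in Z^1(G,Z(M(\mathbb{A}))^\times)$.
   Context: $\mathbb{A}$ is a $C^*$-algebra, $M(\mathbb{A})$ its multiplier algebra with the strict topology (all continuity statements are for this topology), $M(\mathbb{A})^\times$ its invertible elements, $Z(M(\mathbb{A}))^\times$ the invertible central multipliers. $(\mathbb{A},G,\alpha)$ is a $C^*$-dynamical system ($G$ second-countable locally compact, $\alpha:G\to\mathrm{Aut}(\mathbb{A})$ with $r\mapsto\alpha_r(a)$ norm-continuous), extended to $M(\mathbb{A})$. For a subgroup $X\subset M(\mathbb{A})^\times$, $Z^1(G,X)$ is the set of maps $c:G\to X$ with $c(rr')=c(r)\alpha_r[c(r')]$ for all $r,r'$. *)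

theory Defs
  imports "HOL-Analysis.Analysis"
begin

text \<open>A (possibly non-unital) complex C*-algebra: a real Banach algebra carrying a
complex scalar multiplication scaleC extending scaleR, and an involution star
satisfying the C*-identity.\<close>

definition cstar_algebra ::
  "(complex \<Rightarrow> 'a::{real_normed_algebra,banach} \<Rightarrow> 'a) \<Rightarrow> ('a \<Rightarrow> 'a) \<Rightarrow> bool" where
  "cstar_algebra scaleC star \<longleftrightarrow>
     (\<forall>x a. scaleC (complex_of_real x) a = scaleR x a) \<and>
     (\<forall>z w a. scaleC (z + w) a = scaleC z a + scaleC w a) \<and>
     (\<forall>z a b. scaleC z (a + b) = scaleC z a + scaleC z b) \<and>
     (\<forall>z w a. scaleC z (scaleC w a) = scaleC (z * w) a) \<and>
     (\<forall>z a. norm (scaleC z a) = cmod z * norm a) \<and>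
     (\<forall>z a b. scaleC z (a * b) = scaleC z a * b \<and> scaleC z (a * b) = a * scaleC z b) \<and>
     (\<forall>a. star (star a) = a) \<and>
     (\<forall>a b. star (a + b) = star a + star b) \<and>
     (\<forall>z a. star (scaleC z a) = scaleC (cnj z) (star a)) \<and>
     (\<forall>a b. star (a * b) = star b * star a) \<and>
     (\<forall>a. norm (star a * a) = (norm a)\<^sup>2)"

definition star_aut ::
  "(complex \<Rightarrow> 'a::{real_normed_algebra,banach} \<Rightarrow> 'a) \<Rightarrow> ('a \<Rightarrow> 'a) \<Rightarrow> ('a \<Rightarrow> 'a) \<Rightarrow> bool" where
  "star_aut scaleC star f \<longleftrightarrow> bij f \<and>
     (\<forall>a b. f (a + b) = f a + f b) \<and>
     (\<forall>z a. f (scaleC z a) = scaleC z (f a)) \<and>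
     (\<forall>a b. f (a * b) = f a * f b) \<and>
     (\<forall>a. f (star a) = star (f a))"

text \<open>C*-dynamical system (A,G,alpha); the group G is written additively.\<close>

definition cstar_dynamical_system ::
  "(complex \<Rightarrow> 'a::{real_normed_algebra,banach} \<Rightarrow> 'a) \<Rightarrow> ('a \<Rightarrow> 'a)
     \<Rightarrow> ('g::topological_group_add \<Rightarrow> 'a \<Rightarrow> 'a) \<Rightarrow> bool" where
  "cstar_dynamical_system scaleC star \<alpha> \<longleftrightarrow>
     cstar_algebra scaleC star \<and>
     (\<forall>r. star_aut scaleC star (\<alpha> r)) \<and>
     \<alpha> 0 = id \<and> (\<forall>r s. \<alpha> (r + s) = \<alpha> r \<circ> \<alpha> s) \<and>
     (\<forall>a. continuous_on UNIV (\<lambda>r. \<alpha> r a))"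

type_synonym 'a mult = "('a \<Rightarrow> 'a) \<times> ('a \<Rightarrow> 'a)"

text \<open>A multiplier m = (L,R) acts by m a = L a and a m = R a.\<close>

definition multipliers :: "'a::real_normed_algebra mult set" where
  "multipliers = {(L, R). \<forall>a b. a * L b = R a * b}"

definition mmult :: "'a::real_normed_algebra mult \<Rightarrow> 'a mult \<Rightarrow> 'a mult" where
  "mmult m n = (fst m \<circ> fst n, snd n \<circ> snd m)"

definition munit :: "'a mult" where
  "munit = (id, id)"

definition membed :: "'a::real_normed_algebra \<Rightarrow> 'a mult" where
  "membed a = ((\<lambda>b. a * b), (\<lambda>b. b * a))"

definition minvertible :: "'a::real_normed_algebra mult \<Rightarrow> bool" where
  "minvertible m \<longleftrightarrow> m \<in> multipliers \<and>
     (\<exists>n \<in> multipliers. mmult m n = munit \<and> mmult n m = munit)"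

definition minv :: "'a::real_normed_algebra mult \<Rightarrow> 'a mult" where
  "minv m = (SOME n. n \<in> multipliers \<and> mmult m n = munit \<and> mmult n m = munit)"

definition mult_units :: "'a::real_normed_algebra mult set" where
  "mult_units = {m. minvertible m}"

definition central_mult_units :: "'a::real_normed_algebra mult set" where
  "central_mult_units = {m. minvertible m \<and> (\<forall>n \<in> multipliers. mmult m n = mmult n m)}"

definition mext :: "('a \<Rightarrow> 'a) \<Rightarrow> 'a mult \<Rightarrow> 'a mult" where
  "mext f m = (f \<circ> fst m \<circ> inv f, f \<circ> snd m \<circ> inv f)"

text \<open>Strict topology on M(A): initial topology for the maps m \<mapsto> m a and
m \<mapsto> a m (a \<in> A) into A with its norm topology, i.e. the topology of the
seminorms m \<mapsto> norm (m a), norm (a m).\<close>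

definition strict_topology :: "'a::real_normed_algebra mult topology" where
  "strict_topology = subtopology
     (topology_generated_by
        ({{m. fst m a \<in> U} | a U. open U} \<union> {{m. snd m a \<in> U} | a U. open U}))
     multipliers"

definition strictly_continuous :: "('g::topological_space \<Rightarrow> 'a::real_normed_algebra mult) \<Rightarrow> bool" where
  "strictly_continuous f \<longleftrightarrow> continuous_map euclidean strict_topology f"

definition cocycles :: "('g::group_add \<Rightarrow> 'a \<Rightarrow> 'a) \<Rightarrow> 'a::real_normed_algebra mult set
    \<Rightarrow> ('g \<Rightarrow> 'a mult) set" where
  "cocycles \<alpha> X = {c. (\<forall>r. c r \<in> X) \<and>
      (\<forall>r r'. c (r + r') = mmult (c r) (mext (\<alpha> r) (c r')))}"

end

theory Submission
  imports Defs
begin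

text \<open>Strict continuity of \<open>r \<mapsto> \<alpha>\<^sub>r(a) c(r)\<close> means norm continuity of
\<open>r \<mapsto> \<alpha>\<^sub>r(a) c(r) b\<close> and of \<open>r \<mapsto> b \<alpha>\<^sub>r(a) c(r)\<close> for every \<open>b\<close>. The
first is a product of norm-continuous maps. For the second, let \<open>R\<^sub>r\<close> be the right
action of \<open>c(r)\<close>; it is strongly continuous in \<open>r\<close>. On a compact set of \<open>r\<close> the maps
\<open>x \<mapsto> x (c(r) b)\<close> with \<open>\<parallel>b\<parallel> \<le> 1\<close> are pointwise bounded, hence uniformly bounded by
Banach-Steinhaus, and the C*-identity turns this into a uniform bound on \<open>\<parallel>R\<^sub>r\<parallel>\<close>. Strong
continuity plus local equiboundedness make \<open>(r, x) \<mapsto> R\<^sub>r x\<close> jointly continuous, so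
\<open>r \<mapsto> R\<^sub>r(b \<alpha>\<^sub>r(a))\<close> is continuous.\<close>

lemma closed_cover_has_interior:
  fixes E :: "nat \<Rightarrow> 'a::{real_normed_vector,complete_space} set"
  assumes "\<And>n. closed (E n)" and "\<And>x. \<exists>n. x \<in> E n"
  shows "\<exists>n. interior (E n) \<noteq> {}"
proof (rule ccontr)
  assume "\<not> ?thesis"
  then have "euclidean interior_of \<Union> (range E) = {}"
    by (intro Baire_category_alt)
       (auto simp: completely_metrizable_space_euclidean assms(1) euclidean_interior_of)
  moreover have "\<Union> (range E) = UNIV" using assms(2) by blast
  ultimately show False by (simp add: euclidean_interior_of)
qed

lemma uniform_boundedness:
  fixes f :: "'i \<Rightarrow> 'a::banach \<Rightarrow> 'b::real_normed_vector"
  assumes lin: "\<And>i. i \<in> I \<Longrightarrow> bounded_linear (f i)"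
    and pointwise: "\<And>x. \<exists>B. \<forall>i\<in>I. norm (f i x) \<le> B"
  shows "\<exists>M. \<forall>i\<in>I. \<forall>x. norm (f i x) \<le> M * norm x"
proof -
  define E where "E n = (\<Inter>i\<in>I. {x. norm (f i x) \<le> real n})" for n :: nat
  have "closed (E n)" for n
    unfolding E_def using lin
    by (intro closed_INT ballI closed_Collect_le continuous_on_norm continuous_on_const
          linear_continuous_on) auto
  moreover have "\<exists>n. x \<in> E n" for x
  proof -
    obtain B where "\<forall>i\<in>I. norm (f i x) \<le> B" using pointwise by blast
    then have "x \<in> E (nat \<lceil>B\<rceil>)"
      unfolding E_def by (auto intro: order_trans[OF _ real_nat_ceiling_ge])
    then show ?thesis by blast
  qed
  ultimately obtain n where "interior (E n) \<noteq> {}"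
    using closed_cover_has_interior by blast
  then obtain x0 e where e: "e > 0" "ball x0 e \<subseteq> E n"
    by (meson all_not_in_conv open_contains_ball open_interior interior_subset subset_trans)
  have "norm (f i x) \<le> (4 * real n / e) * norm x" if i: "i \<in> I" for i x
  proof (cases "x = 0")
    case True
    then show ?thesis using lin[OF i] by (simp add: linear_simps)
  next
    case False
    define t where "t = e / (2 * norm x)"
    have t: "t > 0" using e False unfolding t_def by simp
    have "norm (t *\<^sub>R x) = e / 2" using False e unfolding t_def by simp
    then have "x0 + t *\<^sub>R x \<in> E n" "x0 \<in> E n"
      using e by (auto intro!: subsetD[OF e(2)] simp: dist_norm)
    then have bounds: "norm (f i (x0 + t *\<^sub>R x)) \<le> real n" "norm (f i x0) \<le> real n"
      using i unfolding E_def by auto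
    have "t * norm (f i x) = norm (f i (x0 + t *\<^sub>R x) - f i x0)"
      using lin[OF i] t by (simp add: linear_simps)
    also have "\<dots> \<le> 2 * real n"
      using norm_triangle_ineq4[of "f i (x0 + t *\<^sub>R x)" "f i x0"] bounds by simp
    finally have "norm (f i x) \<le> 2 * real n / t" using t by (simp add: field_simps)
    also have "\<dots> = (4 * real n / e) * norm x" using False e unfolding t_def by simp
    finally show ?thesis .
  qed
  then show ?thesis by blast
qed

lemma continuous_on_apply_locally_equibounded:
  fixes F :: "'g::t2_space \<Rightarrow> 'a::real_normed_vector \<Rightarrow> 'b::real_normed_vector"
  assumes diff: "\<And>r x y. F r (x - y) = F r x - F r y"
    and bound: "\<And>r0. \<exists>M. \<forall>\<^sub>F r in at r0. \<forall>x. norm (F r x) \<le> M * norm x"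
    and strong: "\<And>x. continuous_on UNIV (\<lambda>r. F r x)"
    and cont: "continuous_on UNIV u"
  shows "continuous_on UNIV (\<lambda>r. F r (u r))"
proof (rule continuous_at_imp_continuous_on, intro ballI)
  fix r0 :: 'g
  obtain M where M: "\<forall>\<^sub>F r in at r0. \<forall>x. norm (F r x) \<le> M * norm x"
    using bound by blast
  have "((\<lambda>r. u r - u r0) \<longlongrightarrow> 0) (at r0)"
    using cont by (simp add: continuous_on_eq_continuous_at isCont_def LIM_zero)
  then have "((\<lambda>r. M * norm (u r - u r0)) \<longlongrightarrow> 0) (at r0)"
    by (intro tendsto_mult_right_zero tendsto_norm_zero)
  moreover have "\<forall>\<^sub>F r in at r0. norm (F r (u r - u r0)) \<le> M * norm (u r - u r0)"
    using M by (rule eventually_mono) blast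
  ultimately have small: "((\<lambda>r. F r (u r - u r0)) \<longlongrightarrow> 0) (at r0)"
    by (rule Lim_null_comparison[rotated])
  have fixed: "((\<lambda>r. F r (u r0)) \<longlongrightarrow> F r0 (u r0)) (at r0)"
    using strong[of "u r0"] by (simp add: continuous_on_eq_continuous_at isCont_def)
  have "F r (u r - u r0) + F r (u r0) = F r (u r)" for r
    using diff[of r "u r" "u r0"] by simp
  then show "isCont (\<lambda>r. F r (u r)) r0"
    using tendsto_add[OF small fixed] by (simp add: isCont_def)
qed

lemma cstar_norm_star:
  assumes "cstar_algebra scaleC (star :: 'a::{real_normed_algebra,banach} \<Rightarrow> 'a)"
  shows "norm (star a) = norm a"
proof -
  have cstar: "\<And>a. norm (star a * a) = (norm a)\<^sup>2" and invol: "\<And>a. star (star a) = a"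
    using assms unfolding cstar_algebra_def by blast+
  have le: "norm a \<le> norm (star a)" for a
  proof (cases "a = 0")
    case False
    have "(norm a)\<^sup>2 \<le> norm (star a) * norm a"
      using cstar[of a] norm_mult_ineq[of "star a" a] by simp
    then show ?thesis using False by (simp add: power2_eq_square)
  qed simp
  show ?thesis using le[of a] le[of "star a"] invol[of a] by simp
qed

lemma cstar_norm_mult_star:
  assumes "cstar_algebra scaleC (star :: 'a::{real_normed_algebra,banach} \<Rightarrow> 'a)"
  shows "norm (a * star a) = (norm a)\<^sup>2"
proof -
  have "norm (star (star a) * star a) = (norm (star a))\<^sup>2"
    using assms unfolding cstar_algebra_def by blast
  moreover have "star (star a) = a" using assms unfolding cstar_algebra_def by blast
  ultimately show ?thesis using cstar_norm_star[OF assms] by simp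
qed

lemma cstar_left_annihilator_eq_0:
  assumes "cstar_algebra scaleC (star :: 'a::{real_normed_algebra,banach} \<Rightarrow> 'a)"
    and "\<And>b. z * b = 0"
  shows "(z :: 'a) = 0"
  using cstar_norm_mult_star[OF assms(1), of z] assms(2)[of "star z"] by simp

lemma multipliersD:
  assumes "m \<in> multipliers"
  shows "a * fst m b = snd m a * b"
  using assms unfolding multipliers_def by (cases m) simp

lemma multiplier_right_diff:
  assumes "cstar_algebra scaleC (star :: 'a::{real_normed_algebra,banach} \<Rightarrow> 'a)"
    and "(m :: 'a mult) \<in> multipliers"
  shows "snd m (x - y) = snd m x - snd m y"
proof -
  have "(snd m (x - y) - (snd m x - snd m y)) * b = 0" for b
    using multipliersD[OF assms(2), symmetric] by (simp add: algebra_simps)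
  then have "snd m (x - y) - (snd m x - snd m y) = 0"
    by (rule cstar_left_annihilator_eq_0[OF assms(1)])
  then show ?thesis by simp
qed

text \<open>By the C*-identity, \<open>b = (snd m x)\<^sup>* / \<parallel>snd m x\<parallel>\<close> is a unit vector with
\<open>\<parallel>snd m x * b\<parallel> = \<parallel>snd m x\<parallel>\<close>.\<close>

lemma norm_multiplier_right_le:
  assumes "cstar_algebra scaleC (star :: 'a::{real_normed_algebra,banach} \<Rightarrow> 'a)"
    and "(m :: 'a mult) \<in> multipliers"
    and bound: "\<And>b. norm b \<le> 1 \<Longrightarrow> norm (x * fst m b) \<le> B"
  shows "norm (snd m x) \<le> B"
proof (cases "snd m x = 0")
  case True
  then show ?thesis using bound[of 0] multipliersD[OF assms(2), of x 0] by simp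
next
  case False
  define b where "b = (1 / norm (snd m x)) *\<^sub>R star (snd m x)"
  have "norm b = 1" using False unfolding b_def by (simp add: cstar_norm_star[OF assms(1)])
  moreover have "norm (snd m x * b) = norm (snd m x)"
    using False unfolding b_def by (simp add: cstar_norm_mult_star[OF assms(1)] power2_eq_square)
  ultimately show ?thesis using bound[of b] multipliersD[OF assms(2), of x b] by simp
qed

lemma multipliers_right_equibounded_on_compact:
  fixes c :: "'g::topological_space \<Rightarrow> 'a::{real_normed_algebra,banach} mult"
  assumes cs: "cstar_algebra scaleC (star :: 'a \<Rightarrow> 'a)"
    and mult: "\<And>r. c r \<in> multipliers"
    and strong: "\<And>x. continuous_on UNIV (\<lambda>r. snd (c r) x)"
    and "compact K"
  shows "\<exists>M. \<forall>r\<in>K. \<forall>x. norm (snd (c r) x) \<le> M * norm x"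
proof -
  define I :: "('g \<times> 'a) set" where "I = K \<times> {b. norm b \<le> 1}"
  define f where "f p x = x * fst (c (fst p)) (snd p)" for p x
  have pointwise: "\<exists>B. \<forall>p\<in>I. norm (f p x) \<le> B" for x
  proof -
    have "compact ((\<lambda>r. snd (c r) x) ` K)"
      using strong[of x] \<open>compact K\<close>
      by (meson compact_continuous_image continuous_on_subset subset_UNIV)
    then obtain B where B: "\<forall>r\<in>K. norm (snd (c r) x) \<le> B"
      by (meson bounded_iff compact_imp_bounded image_eqI)
    have "norm (f p x) \<le> max B 0" if "p \<in> I" for p
    proof -
      have "norm (f p x) = norm (snd (c (fst p)) x * snd p)"
        unfolding f_def by (simp add: multipliersD[OF mult])
      also have "\<dots> \<le> norm (snd (c (fst p)) x) * norm (snd p)"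
        by (rule norm_mult_ineq)
      also have "\<dots> \<le> max B 0 * 1"
        using B that unfolding I_def by (intro mult_mono) auto
      finally show ?thesis by simp
    qed
    then show ?thesis by blast
  qed
  have "\<exists>M. \<forall>p\<in>I. \<forall>x. norm (f p x) \<le> M * norm x"
  proof (rule uniform_boundedness)
    show "bounded_linear (f p)" for p unfolding f_def by (rule bounded_linear_mult_left)
  qed (fact pointwise)
  then obtain M where M: "\<forall>p\<in>I. \<forall>x. norm (f p x) \<le> M * norm x" by blast
  have "norm (snd (c r) x) \<le> M * norm x" if "r \<in> K" for r x
  proof (rule norm_multiplier_right_le[OF cs mult])
    show "norm (x * fst (c r) b) \<le> M * norm x" if "norm b \<le> 1" for b
      using M \<open>r \<in> K\<close> that unfolding I_def f_def by fastforce
  qed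
  then show ?thesis by blast
qed

lemma multipliers_right_locally_equibounded:
  fixes c :: "'g::topological_space \<Rightarrow> 'a::{real_normed_algebra,banach} mult"
  assumes "cstar_algebra scaleC (star :: 'a \<Rightarrow> 'a)"
    and "locally_compact_space (euclidean :: 'g topology)"
    and "\<And>r. c r \<in> multipliers"
    and "\<And>x. continuous_on UNIV (\<lambda>r. snd (c r) x)"
  shows "\<exists>M. \<forall>\<^sub>F r in at r0. \<forall>x. norm (snd (c r) x) \<le> M * norm x"
proof -
  obtain U K where UK: "open U" "compact K" "r0 \<in> U" "U \<subseteq> K"
    using assms(2) unfolding locally_compact_space_def by (simp add: compactin_euclidean_iff) blast
  obtain M where M: "\<forall>r\<in>K. \<forall>x. norm (snd (c r) x) \<le> M * norm x"
    using multipliers_right_equibounded_on_compact[OF assms(1,3,4) UK(2)] by blast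
  have "\<forall>\<^sub>F r in at r0. r \<in> U"
    using UK(1,3) eventually_at_topological by blast
  then have "\<forall>\<^sub>F r in at r0. \<forall>x. norm (snd (c r) x) \<le> M * norm x"
    by (rule eventually_mono) (use M UK(4) in blast)
  then show ?thesis by blast
qed

lemma strictly_continuous_iff:
  fixes f :: "'g::topological_space \<Rightarrow> 'a::real_normed_algebra mult"
  shows "strictly_continuous f \<longleftrightarrow> (\<forall>r. f r \<in> multipliers) \<and>
     (\<forall>a. continuous_on UNIV (\<lambda>r. fst (f r) a)) \<and> (\<forall>a. continuous_on UNIV (\<lambda>r. snd (f r) a))"
proof -
  define S :: "'a mult set set" where
    "S = {{m. fst m a \<in> U} | a U. open U} \<union> {{m. snd m a \<in> U} | a U. open U}"
  have "{m. fst m 0 \<in> UNIV} \<in> S" unfolding S_def by blast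
  then have "\<Union> S = UNIV" by auto
  have cont_iff: "continuous_on UNIV h \<longleftrightarrow> (\<forall>U. open U \<longrightarrow> open (h -` U))" for h :: "'g \<Rightarrow> 'a"
    using continuous_on_open_vimage[OF open_UNIV, of h] by simp
  have fst_vimage: "f -` {m. fst m a \<in> U} = (\<lambda>r. fst (f r) a) -` U"
    and snd_vimage: "f -` {m. snd m a \<in> U} = (\<lambda>r. snd (f r) a) -` U" for a U by auto
  have "(\<forall>U. U \<in> S \<longrightarrow> openin euclidean (f -` U \<inter> topspace euclidean)) \<longleftrightarrow>
     (\<forall>a. continuous_on UNIV (\<lambda>r. fst (f r) a)) \<and> (\<forall>a. continuous_on UNIV (\<lambda>r. snd (f r) a))"
    unfolding cont_iff S_def by (simp, safe; metis fst_vimage snd_vimage)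
  with \<open>\<Union> S = UNIV\<close> show ?thesis
    unfolding strictly_continuous_def strict_topology_def continuous_map_in_subtopology
      continuous_on_generated_topo_iff S_def[symmetric] by (auto simp: Pi_iff)
qed

lemma continuous_on_multiplier_right_apply:
  fixes c :: "'g::t2_space \<Rightarrow> 'a::{real_normed_algebra,banach} mult"
  assumes cs: "cstar_algebra scaleC (star :: 'a \<Rightarrow> 'a)"
    and "locally_compact_space (euclidean :: 'g topology)"
    and mult: "\<And>r. c r \<in> multipliers"
    and "\<And>x. continuous_on UNIV (\<lambda>r. snd (c r) x)"
    and "continuous_on UNIV u"
  shows "continuous_on UNIV (\<lambda>r. snd (c r) (u r))"
proof (rule continuous_on_apply_locally_equibounded[where F = "\<lambda>r. snd (c r)"])
  show "snd (c r) (x - y) = snd (c r) x - snd (c r) y" for r x y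
    by (rule multiplier_right_diff[OF cs mult])
  show "\<exists>M. \<forall>\<^sub>F r in at r0. \<forall>x. norm (snd (c r) x) \<le> M * norm x" for r0
    by (rule multipliers_right_locally_equibounded[OF assms(1-4)])
qed (use assms in auto)

lemma strictly_continuous_mult_membed:
  fixes c :: "'g::{topological_group_add, t2_space} \<Rightarrow> 'a::{real_normed_algebra,banach} mult"
  assumes "locally_compact_space (euclidean :: 'g topology)"
    and "cstar_dynamical_system scaleC star \<alpha>"
    and "strictly_continuous c"
  shows "strictly_continuous (\<lambda>r. mmult (membed (\<alpha> r a)) (c r))"
proof -
  have cs: "cstar_algebra scaleC star" and orbit: "continuous_on UNIV (\<lambda>r. \<alpha> r a)"
    using assms(2) unfolding cstar_dynamical_system_def by blast+
  have mult: "\<And>r. c r \<in> multipliers"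
    and left: "\<And>b. continuous_on UNIV (\<lambda>r. fst (c r) b)"
    and right: "\<And>b. continuous_on UNIV (\<lambda>r. snd (c r) b)"
    using assms(3) unfolding strictly_continuous_iff by blast+
  have "mmult (membed (\<alpha> r a)) (c r) \<in> multipliers" for r
    using multipliersD[OF mult, symmetric]
    by (simp add: multipliers_def mmult_def membed_def mult.assoc)
  moreover have "continuous_on UNIV (\<lambda>r. \<alpha> r a * fst (c r) b)" for b
    using orbit left by (rule continuous_on_mult)
  moreover have "continuous_on UNIV (\<lambda>r. snd (c r) (b * \<alpha> r a))" for b
    using orbit by (intro continuous_on_multiplier_right_apply[OF cs assms(1) mult right]
        continuous_on_mult continuous_on_const)
  ultimately show ?thesis
    unfolding strictly_continuous_iff by (simp add: mmult_def membed_def)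
qed

theorem mainTheorem11:
  fixes scaleC :: "complex \<Rightarrow> 'a::{real_normed_algebra,banach} \<Rightarrow> 'a"
    and star :: "'a \<Rightarrow> 'a"
    and \<alpha> :: "'g::{topological_group_add, t2_space, second_countable_topology} \<Rightarrow> 'a \<Rightarrow> 'a"
  assumes "locally_compact_space (euclidean :: 'g topology)"
    and "cstar_dynamical_system scaleC star \<alpha>"
  shows "(\<forall>c. c \<in> cocycles \<alpha> mult_units \<and> strictly_continuous c
              \<and> strictly_continuous (\<lambda>r. minv (c r))
          \<longrightarrow> (\<forall>a. strictly_continuous (\<lambda>r. mmult (membed (\<alpha> r a)) (c r))))
       \<and> (\<forall>c. c \<in> cocycles \<alpha> central_mult_units \<and> strictly_continuous c
          \<longrightarrow> (\<forall>a. strictly_continuous (\<lambda>r. mmult (membed (\<alpha> r a)) (c r))))"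
  using strictly_continuous_mult_membed[OF assms] by blast

end
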